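(* Let $q$ be a prime power, let $p$ be the characteristic of $\mathbb{F}_q$, and let $r = 2n+1$ be a prime such that $q$ is a primitive root modulo $r$. Let $\beta \in \mathbb{F}_{q^{2n}}$ be a primitive $r$th root of unity and put $\alpha = \beta + \beta^{-1} \in \mathbb{F}_{q^n}$. Then the multiplicative order $L_n$ of $\alpha$ satisfies $$L_n \geqslant P(n-1, p-1).$$
   Context: For integers $s \geqslant 1$ and $v \geqslant 0$, $P(s,v)$ denotes the number of integer partitions of $s$ in which each part appears at most $v$ times, i.e. the number of solutions of $\sum_{j=1}^{s} u_j j = s$ in non-negative integers $u_1,\ldots,u_s \leqslant v$. The element $\alpha$ is called a Gauss period of type $(n,2)$. *)

theory Defs
  imports "HOL-Number_Theory.Number_Theory"
begin

definition mult_order :: "'a::field \<Rightarrow> nat" where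
  "mult_order x = (if \<exists>k>0. x ^ k = 1 then (LEAST k. k > 0 \<and> x ^ k = 1) else 0)"

text \<open>P(s,v): number of partitions of s in which each part appears at most v times,
  i.e. the number of (u_1,...,u_s) with 0 \<le> u_j \<le> v and \<Sum> u_j * j = s
  (u is extended by 0 outside {1..s}).\<close>
definition part_count :: "nat \<Rightarrow> nat \<Rightarrow> nat" where
  "part_count s v = card {u :: nat \<Rightarrow> nat.
      (\<forall>j. (j < 1 \<or> s < j) \<longrightarrow> u j = 0) \<and>
      (\<forall>j\<in>{1..s}. u j \<le> v) \<and>
      (\<Sum>j=1..s. u j * j) = s}"

end

theory Submission
  imports Defs "HOL-Computational_Algebra.Polynomial"
begin

text \<open>Since \<open>q\<close> generates the units mod \<open>r\<close>, each \<open>\<beta>^j + \<beta>^-j\<close> with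
  \<open>0 < j < r\<close> is a Frobenius conjugate \<open>\<alpha>^(q^k)\<close>, so every product \<open>\<Prod>j (\<beta>^j + \<beta>^-j)^(u j)\<close>
  is a power of \<open>\<alpha>\<close>. For a partition \<open>u\<close> of \<open>n - 1\<close> this product equals
  \<open>\<beta>^-(n-1) F_u(\<beta>)\<close>, where \<open>F_u = \<Prod>j (1 + X^(2j))^(u j)\<close> has degree at most \<open>2n - 2\<close>.
  If two partitions give the same product, their polynomials agree at the \<open>2n\<close> distinct
  conjugates \<open>\<beta>^(q^k)\<close> of \<open>\<beta>\<close> and are therefore equal; and as long as all parts occur
  fewer than \<open>p\<close> times, \<open>F_u\<close> determines \<open>u\<close>. So distinct partitions give distinct powers
  of \<open>\<alpha>\<close>.\<close>

lemma power_mult_order [simp]: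
  fixes x :: "'a::field"
  shows "x ^ mult_order x = 1"
proof (cases "\<exists>k>0. x ^ k = 1")
  case True
  then show ?thesis
    using LeastI_ex[of "\<lambda>k. k > 0 \<and> x ^ k = 1"] unfolding mult_order_def by simp
next
  case False
  then have "mult_order x = 0"
    unfolding mult_order_def by (rule if_not_P)
  then show ?thesis
    by simp
qed

lemma power_neq_one_below_mult_order:
  fixes x :: "'a::field"
  assumes "0 < i" "i < mult_order x"
  shows "x ^ i \<noteq> 1"
  using assms not_less_Least unfolding mult_order_def by (auto split: if_splits)

lemma mult_order_0 [simp]: "mult_order (0::'a::field) = 0"
proof -
  have "\<not> (\<exists>k>0. (0::'a) ^ k = 1)"
    by (auto simp: power_0_left)
  then show ?thesis
    unfolding mult_order_def by (rule if_not_P)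
qed

lemma power_mod_mult_order:
  fixes x :: "'a::field"
  shows "x ^ (e mod mult_order x) = x ^ e"
proof -
  have "x ^ e = x ^ (mult_order x * (e div mult_order x) + e mod mult_order x)"
    by simp
  also have "\<dots> = x ^ (e mod mult_order x)"
    by (simp only: power_add power_mult power_mult_order power_one mult_1_left)
  finally show ?thesis ..
qed

lemma power_diff_eq_one:
  fixes x :: "'a::field"
  assumes "x \<noteq> 0" "x ^ a = x ^ b" "a \<le> b"
  shows "x ^ (b - a) = 1"
proof -
  have "x ^ a * x ^ (b - a) = x ^ b"
    using assms(3) by (simp flip: power_add)
  then have "x ^ a * x ^ (b - a) = x ^ a * 1"
    using assms(2) by simp
  then show ?thesis
    using assms(1) by simp
qed

lemma mult_order_pos:
  fixes x :: "'a::{field,finite}"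
  assumes "x \<noteq> 0"
  shows "0 < mult_order x"
proof -
  obtain i j :: nat where ij: "x ^ i = x ^ j" "i < j"
  proof -
    have "\<not> inj (\<lambda>k::nat. x ^ k)"
      using finite_imageD[of "\<lambda>k::nat. x ^ k" UNIV] by auto
    then show ?thesis
      using that unfolding inj_def by (metis linorder_neqE_nat)
  qed
  have "x ^ (j - i) = 1"
    using power_diff_eq_one[OF assms ij(1)] ij(2) by simp
  then have "\<exists>k>0. x ^ k = 1"
    using ij(2) by (intro exI[of _ "j - i"]) simp
  then show ?thesis
    using LeastI_ex[of "\<lambda>k. k > 0 \<and> x ^ k = 1"] unfolding mult_order_def by simp
qed

lemma inj_on_power_mult_order:
  fixes x :: "'a::field"
  assumes "x \<noteq> 0"
  shows "inj_on (\<lambda>i. x ^ i) {..<mult_order x}"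
proof -
  have "x ^ a \<noteq> x ^ b" if "a < b" "b < mult_order x" for a b
  proof
    assume "x ^ a = x ^ b"
    then have "x ^ (b - a) = 1"
      using power_diff_eq_one[OF assms] \<open>a < b\<close> by simp
    then show False
      using power_neq_one_below_mult_order[of "b - a" x] that by simp
  qed
  then show ?thesis
    by (intro inj_onI) (auto elim: linorder_neqE_nat dest: sym)
qed

lemma power_in_powers_below_mult_order:
  fixes x :: "'a::{field,finite}"
  assumes "x \<noteq> 0"
  shows "x ^ e \<in> (\<lambda>i. x ^ i) ` {..<mult_order x}"
proof
  show "x ^ e = x ^ (e mod mult_order x)"
    by (simp add: power_mod_mult_order)
  show "e mod mult_order x \<in> {..<mult_order x}"
    using mult_order_pos[OF assms] by simp
qed

definition gauss_poly :: "nat set \<Rightarrow> (nat \<Rightarrow> nat) \<Rightarrow> 'a::comm_ring_1 poly" where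
  "gauss_poly J u = (\<Prod>j\<in>J. (1 + monom 1 (2 * j)) ^ u j)"

lemma degree_gauss_poly_le:
  assumes "finite J"
  shows "degree (gauss_poly J u :: 'a::comm_ring_1 poly) \<le> 2 * (\<Sum>j\<in>J. u j * j)"
proof -
  have "degree ((1 + monom (1::'a) (2 * j)) ^ u j) \<le> 2 * (u j * j)" for j
  proof -
    have "degree (1 + monom (1::'a) (2 * j)) \<le> 2 * j"
      using degree_add_le_max[of 1 "monom (1::'a) (2 * j)"] degree_monom_le[of "1::'a" "2 * j"]
      by simp
    then have "degree ((1 + monom (1::'a) (2 * j)) ^ u j) \<le> 2 * j * u j"
      using degree_power_le[of "1 + monom (1::'a) (2 * j)" "u j"] mult_le_mono1 order_trans
      by blast
    then show ?thesis
      by (simp add: ac_simps)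
  qed
  then have "degree (gauss_poly J u :: 'a poly) \<le> (\<Sum>j\<in>J. 2 * (u j * j))"
    unfolding gauss_poly_def
    using degree_prod_sum_le[OF assms, of "\<lambda>j. (1 + monom (1::'a) (2 * j)) ^ u j"]
    by (simp add: o_def) (meson order_trans sum_mono)
  then show ?thesis
    by (simp add: sum_distrib_left)
qed

lemma poly_gauss_poly_power_char:
  fixes x :: "'a::comm_ring_1"
  assumes "prime CHAR('a)" "Q = CHAR('a) ^ k"
  shows "poly (gauss_poly J u) (x ^ Q) = poly (gauss_poly J u) x ^ Q"
proof -
  have "(1 + (x ^ Q) ^ (2 * j)) ^ u j = ((1 + x ^ (2 * j)) ^ u j) ^ Q" for j
  proof -
    have "(1 + x ^ (2 * j)) ^ Q = 1 + (x ^ Q) ^ (2 * j)"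
      using freshmans_dream'[OF assms, of 1 "x ^ (2 * j)"]
      by (simp only: power_one power_mult[symmetric] mult.commute)
    then show ?thesis
      by (metis power_mult mult.commute)
  qed
  then show ?thesis
    by (simp add: gauss_poly_def poly_prod poly_monom prod_power_distrib)
qed

lemma dvd_power_diff_one:
  fixes a :: "'a::comm_ring_1"
  assumes "z dvd a - 1"
  shows "z dvd a ^ k - 1"
  using assms by (simp add: power_diff_1_eq)

lemma dvd_prod_diff_one:
  fixes f :: "'b \<Rightarrow> 'a::comm_ring_1"
  assumes "\<And>x. x \<in> S \<Longrightarrow> z dvd f x - 1"
  shows "z dvd prod f S - 1"
  using assms
proof (induction S rule: infinite_finite_induct)
  case (insert x F)
  have "prod f (insert x F) - 1 = f x * (prod f F - 1) + (f x - 1)"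
    using insert(1,2) by (simp add: algebra_simps)
  then show ?case
    using insert by (metis dvd_add dvd_mult insert_iff)
qed simp_all

lemma square_dvd_binomial_remainder:
  fixes x :: "'a::comm_ring_1"
  shows "x ^ 2 dvd (1 + x) ^ k - 1 - of_nat k * x"
proof (induction k)
  case (Suc k)
  then obtain d where "(1 + x) ^ k = 1 + of_nat k * x + x ^ 2 * d"
    by (auto elim!: dvdE simp: algebra_simps)
  then have "(1 + x) ^ Suc k - 1 - of_nat (Suc k) * x = x ^ 2 * ((1 + x) * d + of_nat k)"
    by (simp add: algebra_simps power2_eq_square)
  then show ?case
    by simp
qed simp

text \<open>Modulo \<open>X^(a+1)\<close>, the factor \<open>(1 + X^a)^k\<close> is \<open>1 + k X^a\<close>.\<close>
lemma coeff_one_plus_monom_power_mult: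
  fixes r :: "'a::comm_ring_1 poly"
  assumes "0 < a" "monom 1 (Suc a) dvd r - 1"
  shows "coeff ((1 + monom 1 a) ^ k * r) a = of_nat k"
proof -
  let ?x = "monom (1::'a) a" and ?z = "monom (1::'a) (Suc a)"
  have "?x ^ 2 = ?z * monom 1 (a - 1)"
    using assms(1) by (simp add: power2_eq_square mult_monom)
  then have "?z dvd (1 + ?x) ^ k - 1 - of_nat k * ?x"
    using square_dvd_binomial_remainder dvd_trans by (metis dvd_triv_left)
  then obtain d where d: "(1 + ?x) ^ k = 1 + of_nat k * ?x + ?z * d"
    by (auto elim!: dvdE simp: algebra_simps)
  obtain e where e: "r = 1 + ?z * e"
    using assms(2) by (auto elim!: dvdE simp: algebra_simps)
  have "(1 + ?x) ^ k * r = 1 + of_nat k * ?x + ?z * (e + of_nat k * ?x * e + d * r)"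
    by (simp add: d e algebra_simps)
  then show ?thesis
    using assms(1) by (simp add: coeff_monom_mult of_nat_poly)
qed

lemma gauss_poly_atLeastAtMost:
  assumes "b \<le> N"
  shows "gauss_poly {b..N} u = (1 + monom 1 (2 * b)) ^ u b * gauss_poly {Suc b..N} u"
proof -
  have "{b..N} = insert b {Suc b..N}"
    using assms by auto
  then show ?thesis
    by (simp add: gauss_poly_def)
qed

lemma coeff_gauss_poly_atLeastAtMost:
  assumes "0 < b" "b \<le> N"
  shows "coeff (gauss_poly {b..N} u :: 'a::comm_ring_1 poly) (2 * b) = of_nat (u b)"
proof -
  have "monom (1::'a) (Suc (2 * b)) dvd 1 + monom 1 (2 * j) - 1" if "j \<in> {Suc b..N}" for j
  proof -
    have "monom (1::'a) (2 * j) = monom 1 (Suc (2 * b)) * monom 1 (2 * j - Suc (2 * b))"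
      using that by (simp add: mult_monom)
    then show ?thesis
      by simp
  qed
  then have "monom (1::'a) (Suc (2 * b)) dvd gauss_poly {Suc b..N} u - 1"
    unfolding gauss_poly_def by (intro dvd_prod_diff_one dvd_power_diff_one)
  then show ?thesis
    using assms by (simp add: gauss_poly_atLeastAtMost coeff_one_plus_monom_power_mult)
qed

text \<open>The coefficient of \<open>X^(2a)\<close> recovers \<open>u a\<close> modulo the characteristic; then the
  lowest factor is cancelled.\<close>
lemma gauss_poly_eq_imp_eq:
  assumes "0 < a" "\<forall>j\<in>{a..N}. u j < CHAR('a) \<and> v j < CHAR('a)"
    and "(gauss_poly {a..N} u :: 'a::idom poly) = gauss_poly {a..N} v"
    and "j \<in> {a..N}"
  shows "u j = v j"
  using assms
proof (induction "Suc N - a" arbitrary: a)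
  case (Suc d)
  then have "a \<le> N"
    by simp
  have "(of_nat (u a) :: 'a) = coeff (gauss_poly {a..N} u) (2 * a)"
    using Suc.prems(1) \<open>a \<le> N\<close> by (simp add: coeff_gauss_poly_atLeastAtMost)
  also have "\<dots> = of_nat (v a)"
    using Suc.prems(1,3) \<open>a \<le> N\<close> by (simp add: coeff_gauss_poly_atLeastAtMost)
  finally have "u a = v a"
    using Suc.prems(2) \<open>a \<le> N\<close> by (simp add: of_nat_eq_iff_cong_CHAR cong_def)
  moreover have "1 + monom (1::'a) (2 * a) \<noteq> 0"
  proof -
    have "coeff (1 + monom (1::'a) (2 * a)) 0 = 1"
      using Suc.prems(1) by simp
    then show ?thesis
      by (metis coeff_0 zero_neq_one)
  qed
  ultimately have tail: "(gauss_poly {Suc a..N} u :: 'a poly) = gauss_poly {Suc a..N} v"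
    using Suc.prems(3) \<open>a \<le> N\<close> by (simp add: gauss_poly_atLeastAtMost)
  show ?case
  proof (cases "j = a")
    case False
    then have "j \<in> {Suc a..N}"
      using Suc.prems(4) by auto
    then show ?thesis
      using Suc.hyps(2) Suc.prems(1,2) tail by (intro Suc.hyps(1)[of "Suc a"]) auto
  qed (use \<open>u a = v a\<close> in simp)
qed simp

lemma conjugate_gauss_period:
  fixes \<beta> :: "'a::field"
  assumes "prime CHAR('a)" "q = CHAR('a) ^ m"
    and "mult_order \<beta> = r" "1 < r" "residue_primroot r q" "j \<in> totatives r"
  shows "\<exists>k. \<beta> ^ j + inverse \<beta> ^ j = (\<beta> + inverse \<beta>) ^ (q ^ k)"
proof -
  have "j \<in> (\<lambda>i. q ^ i mod r) ` {..<totient r}"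
    using residue_primroot_is_generator[OF assms(4,5)] assms(6) by (simp add: bij_betw_def)
  then obtain k where k: "q ^ k mod r = j"
    by blast
  have "(\<beta> + inverse \<beta>) ^ (q ^ k) = \<beta> ^ (q ^ k) + inverse \<beta> ^ (q ^ k)"
    by (rule freshmans_dream'[OF assms(1), of _ "m * k"]) (simp add: assms(2) power_mult)
  also have "\<dots> = \<beta> ^ j + inverse \<beta> ^ j"
    using power_mod_mult_order[of \<beta> "q ^ k"] assms(3) k by (simp add: power_inverse)
  finally show ?thesis
    by (intro exI[of _ k]) (rule sym)
qed

lemma inj_on_conjugates:
  fixes \<beta> :: "'a::field"
  assumes "mult_order \<beta> = r" "1 < r" "residue_primroot r q"
  shows "inj_on (\<lambda>k. \<beta> ^ (q ^ k)) {..<totient r}"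
proof
  fix k l
  assume kl: "k \<in> {..<totient r}" "l \<in> {..<totient r}" "\<beta> ^ (q ^ k) = \<beta> ^ (q ^ l)"
  have "\<beta> \<noteq> 0"
    using assms(1,2) by auto
  have "\<beta> ^ (q ^ k mod r) = \<beta> ^ (q ^ l mod r)"
    using kl(3) by (simp add: power_mod_mult_order flip: assms(1))
  then have "q ^ k mod r = q ^ l mod r"
    using inj_on_power_mult_order[OF \<open>\<beta> \<noteq> 0\<close>] assms(1,2) by (auto simp: inj_on_def)
  then show "k = l"
    using residue_primroot_is_generator[OF assms(2,3)] kl(1,2) by (auto simp: bij_betw_def inj_on_def)
qed

lemma gauss_period_nonzero:
  fixes \<beta> :: "'a::field"
  assumes "mult_order \<beta> = r" "odd r" "1 < r"
  shows "\<beta> + inverse \<beta> \<noteq> 0"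
proof
  assume "\<beta> + inverse \<beta> = 0"
  have "\<beta> \<noteq> 0"
    using assms(1,3) by auto
  then have sq: "\<beta> ^ 2 = -1"
    using \<open>\<beta> + inverse \<beta> = 0\<close> by (simp add: power2_eq_square field_simps add_eq_0_iff)
  have "1 = (\<beta> ^ r) ^ 2"
    using power_mult_order[of \<beta>] assms(1) by simp
  also have "\<dots> = (\<beta> ^ 2) ^ r"
    by (simp flip: power_mult add: mult.commute)
  also have "\<dots> = -1"
    using assms(2) by (simp add: sq)
  finally have "\<beta> ^ 2 = 1"
    using sq by simp
  moreover have "2 < r"
    using assms(2,3) by (auto elim: oddE)
  ultimately show False
    using power_neq_one_below_mult_order[of 2 \<beta>] assms(1) by simp
qed

text \<open>Since \<open>\<beta>^j + \<beta>^-j = \<beta>^-j (1 + \<beta>^(2j))\<close>, products of the conjugates of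
  \<open>\<beta> + \<beta>^-1\<close> are values of \<open>gauss_poly\<close> at \<open>\<beta>\<close>.\<close>
lemma prod_power_add_inverse_power:
  fixes \<beta> :: "'a::field"
  assumes "\<beta> \<noteq> 0"
  shows "(\<Prod>j\<in>J. (\<beta> ^ j + inverse \<beta> ^ j) ^ u j)
    = inverse \<beta> ^ (\<Sum>j\<in>J. u j * j) * poly (gauss_poly J u) \<beta>"
proof -
  have "(\<beta> ^ j + inverse \<beta> ^ j) ^ u j = inverse \<beta> ^ (u j * j) * (1 + \<beta> ^ (2 * j)) ^ u j" for j
  proof -
    have "inverse \<beta> ^ j * \<beta> ^ (2 * j) = \<beta> ^ j"
      using assms by (simp add: mult_2 power_add power_inverse)
    then have "\<beta> ^ j + inverse \<beta> ^ j = inverse \<beta> ^ j * (1 + \<beta> ^ (2 * j))"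
      by (simp add: algebra_simps)
    then show ?thesis
      by (simp add: power_mult_distrib power_mult mult.commute[of "u j"])
  qed
  then show ?thesis
    by (simp add: prod.distrib power_sum gauss_poly_def poly_prod poly_monom)
qed

definition bounded_partitions :: "nat \<Rightarrow> nat \<Rightarrow> (nat \<Rightarrow> nat) set" where
  "bounded_partitions s v = {u. (\<forall>j. j \<notin> {1..s} \<longrightarrow> u j = 0) \<and>
      (\<forall>j\<in>{1..s}. u j \<le> v) \<and> (\<Sum>j\<in>{1..s}. u j * j) = s}"

lemma part_count_eq_card: "part_count s v = card (bounded_partitions s v)"
proof -
  have "(j < 1 \<or> s < j) \<longleftrightarrow> j \<notin> {1..s}" for j
    by auto
  then show ?thesis
    by (simp only: part_count_def bounded_partitions_def)
qed

lemma inj_on_prod_conjugate_powers: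
  fixes \<beta> :: "'a::field"
  assumes "prime CHAR('a)" "q = CHAR('a) ^ m"
    and "mult_order \<beta> = r" "1 < r" "residue_primroot r q" "2 * N < totient r"
    and "b < CHAR('a)"
  shows "inj_on (\<lambda>u. \<Prod>j\<in>{1..N}. (\<beta> ^ j + inverse \<beta> ^ j) ^ u j) (bounded_partitions N b)"
proof
  fix u v
  assume u: "u \<in> bounded_partitions N b"
    and v: "v \<in> bounded_partitions N b"
    and eq: "(\<Prod>j\<in>{1..N}. (\<beta> ^ j + inverse \<beta> ^ j) ^ u j)
      = (\<Prod>j\<in>{1..N}. (\<beta> ^ j + inverse \<beta> ^ j) ^ v j)"
  have "\<beta> \<noteq> 0"
    using assms(3,4) by auto
  then have root: "poly (gauss_poly {1..N} u) \<beta> = poly (gauss_poly {1..N} v) \<beta>"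
    using eq u v by (simp add: prod_power_add_inverse_power bounded_partitions_def)
  have conj: "poly (gauss_poly {1..N} u) (\<beta> ^ (q ^ k)) = poly (gauss_poly {1..N} v) (\<beta> ^ (q ^ k))"
    for k
  proof -
    have qk: "q ^ k = CHAR('a) ^ (m * k)"
      using assms(2) by (simp add: power_mult)
    show ?thesis
      using poly_gauss_poly_power_char[OF assms(1) qk] root by simp
  qed
  have card: "card ((\<lambda>k. \<beta> ^ (q ^ k)) ` {..<totient r}) = totient r"
    using inj_on_conjugates[OF assms(3-5)] by (simp add: card_image)
  have deg: "degree (gauss_poly {1..N} w :: 'a poly) < totient r"
    if "w \<in> bounded_partitions N b" for w
    using order_le_less_trans[OF degree_gauss_poly_le[of "{1..N}" w]] that assms(6)
    by (simp add: bounded_partitions_def)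
  have "gauss_poly {1..N} u = (gauss_poly {1..N} v :: 'a poly)"
  proof (rule poly_eqI_degree)
    show "poly (gauss_poly {1..N} u) x = poly (gauss_poly {1..N} v) x"
      if "x \<in> (\<lambda>k. \<beta> ^ (q ^ k)) ` {..<totient r}" for x
      using that conj by blast
  qed (use card deg u v in simp_all)
  moreover have "\<forall>j\<in>{1..N}. u j < CHAR('a) \<and> v j < CHAR('a)"
    using u v assms(7) by (auto simp: bounded_partitions_def intro: le_less_trans)
  ultimately have "u j = v j" if "j \<in> {1..N}" for j
    using gauss_poly_eq_imp_eq[of 1 N u v j] that by simp
  moreover have "u j = 0 \<and> v j = 0" if "j \<notin> {1..N}" for j
    using u v that by (simp add: bounded_partitions_def)
  ultimately show "u = v"
    by fastforce
qed

lemma prod_conjugate_powers_mem_powers: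
  fixes \<beta> :: "'a::{field,finite}"
  assumes "prime CHAR('a)" "q = CHAR('a) ^ m"
    and "mult_order \<beta> = r" "1 < r" "residue_primroot r q" "J \<subseteq> totatives r"
    and "\<beta> + inverse \<beta> \<noteq> 0"
  shows "(\<Prod>j\<in>J. (\<beta> ^ j + inverse \<beta> ^ j) ^ u j)
    \<in> (\<lambda>i. (\<beta> + inverse \<beta>) ^ i) ` {..<mult_order (\<beta> + inverse \<beta>)}"
proof -
  obtain k where k: "\<And>j. j \<in> J \<Longrightarrow> \<beta> ^ j + inverse \<beta> ^ j = (\<beta> + inverse \<beta>) ^ (q ^ k j)"
    using conjugate_gauss_period[OF assms(1-5)] assms(6) by (metis subsetD)
  have "(\<Prod>j\<in>J. (\<beta> ^ j + inverse \<beta> ^ j) ^ u j) = (\<beta> + inverse \<beta>) ^ (\<Sum>j\<in>J. q ^ k j * u j)"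
    by (simp add: k power_sum power_mult)
  then show ?thesis
    using power_in_powers_below_mult_order[OF assms(7)] by simp
qed

theorem theorem1:
  fixes q p m n r :: nat and \<beta> :: "'a::{field, finite}"
  assumes "prime p" and "m > 0" and "q = p ^ m"
    and "CHAR('a) = p"
    and "card (UNIV :: 'a set) = q ^ (2 * n)"
    and "r = 2 * n + 1" and "prime r"
    and "residue_primroot r q"
    and "mult_order \<beta> = r"
  shows "mult_order (\<beta> + inverse \<beta>) \<ge> part_count (n - 1) (p - 1)"
proof -
  let ?\<alpha> = "\<beta> + inverse \<beta>"
  let ?E = "\<lambda>u. \<Prod>j\<in>{1..n - 1}. (\<beta> ^ j + inverse \<beta> ^ j) ^ u j"
  let ?U = "bounded_partitions (n - 1) (p - 1)"
  have "1 < r"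
    using assms(7) prime_gt_1_nat by blast
  then have r: "1 < r" "odd r" "0 < n" "totient r = 2 * n" "{1..n - 1} \<subseteq> totatives r"
    using assms(6,7) by (auto simp: totient_prime totatives_prime)
  have char: "prime CHAR('a)" "q = CHAR('a) ^ m"
    using assms(1,3,4) by simp_all
  have "part_count (n - 1) (p - 1) = card (?E ` ?U)"
    using inj_on_prod_conjugate_powers[OF char assms(9) r(1) assms(8), of "n - 1" "p - 1"] r(3,4)
      prime_gt_1_nat[OF assms(1)]
    by (simp add: part_count_eq_card card_image assms(4))
  also have "\<dots> \<le> card ((\<lambda>i. ?\<alpha> ^ i) ` {..<mult_order ?\<alpha>})"
    using prod_conjugate_powers_mem_powers[OF char assms(9) r(1) assms(8) r(5)]
      gauss_period_nonzero[OF assms(9) r(2,1)]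
    by (intro card_mono) auto
  also have "\<dots> \<le> mult_order ?\<alpha>"
    using card_image_le by fastforce
  finally show ?thesis .
qed

end
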